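(* Fix $\vartheta_1\in(0,\pi/2)$. The function $\Phi$ is increasing on $[\vartheta_1,\pi/2]$, with $\Phi(\vartheta_1)=0$ and $\Phi(\pi/2)=\frac{\pi}{2}(1-\cos\vartheta_1)$.
   Context: For integers $k\ge0$ let $I_k=[\vartheta_1+k\pi,(k+1)\pi-\vartheta_1]$ (so $|\sin\eta|\ge\sin\vartheta_1$ on $I_k$). For $\eta\in I_k$ set $\gamma(\eta)=\sqrt{1-\sin^2\vartheta_1/\sin^2\eta}\in[0,1)$ and $$\Phi(\eta)=-\eta\,\gamma(\eta)+k\pi+\arccos\Big(\frac{\cos(\eta-k\pi)}{\cos\vartheta_1}\Big),\qquad \arccos\in[0,\pi].$$ *)

theory Defs
  imports "HOL-Analysis.Analysis"
begin

definition gamma_fn :: "real \<Rightarrow> real \<Rightarrow> real" where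
  "gamma_fn th1 eta = sqrt (1 - (sin th1)^2 / (sin eta)^2)"

text \<open>Phi on the interval I_k (k is the index of the interval containing eta).\<close>
definition Phi :: "real \<Rightarrow> nat \<Rightarrow> real \<Rightarrow> real" where
  "Phi th1 k eta = - eta * gamma_fn th1 eta + real k * pi
     + arccos (cos (eta - real k * pi) / cos th1)"

end

theory Submission
  imports Defs
begin

text \<open>With \<open>s = sin \<vartheta>\<^sub>1\<close> and \<open>\<gamma> = gamma_fn \<vartheta>\<^sub>1 \<eta>\<close>, the identity
  \<open>sqrt (1 - (cos \<eta> / cos \<vartheta>\<^sub>1)\<^sup>2) = \<gamma> sin \<eta> / cos \<vartheta>\<^sub>1\<close> makes the arccos term contribute
  \<open>1/\<gamma>\<close> to \<open>\<Phi>'\<close>, and \<open>1/\<gamma> - \<gamma> = s\<^sup>2/(\<gamma> sin\<^sup>2 \<eta>)\<close>.  Altogether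
  \<open>\<Phi>'(\<eta>) = s\<^sup>2/(\<gamma> sin\<^sup>2 \<eta>) \<cdot> (1 - \<eta> cot \<eta>)\<close>, which is positive on \<open>(\<vartheta>\<^sub>1, \<pi>/2)\<close> since
  \<open>\<eta> cos \<eta> < sin \<eta>\<close> there.  The boundary values are immediate:
  \<open>\<gamma>(\<vartheta>\<^sub>1) = 0\<close> and \<open>\<gamma>(\<pi>/2) = cos \<vartheta>\<^sub>1\<close>.\<close>

lemma x_cos_less_sin:
  fixes x :: real
  assumes "0 < x" "x < pi/2"
  shows "x * cos x < sin x"
proof -
  have "(\<lambda>y. sin y - y * cos y) 0 < (\<lambda>y. sin y - y * cos y) x"
  proof (rule DERIV_pos_imp_increasing_open[OF assms(1)])
    fix y :: real
    assume y: "0 < y" "y < x"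
    show "\<exists>d. ((\<lambda>y. sin y - y * cos y) has_real_derivative d) (at y) \<and> d > 0"
    proof (intro exI conjI)
      show "((\<lambda>y. sin y - y * cos y) has_real_derivative y * sin y) (at y)"
        by (rule derivative_eq_intros refl | simp)+
      show "y * sin y > 0"
        using y assms by (simp add: sin_gt_zero)
    qed
  qed (intro continuous_intros)
  then show ?thesis by simp
qed

lemma sin_ratio_less_one:
  fixes t x :: real
  assumes "(sin t)^2 < (sin x)^2"
  shows "(sin t)^2 / (sin x)^2 < 1"
  using assms by (simp add: divide_less_eq_1)

lemma gamma_fn_pos:
  assumes "(sin t)^2 < (sin x)^2"
  shows "gamma_fn t x > 0"
  using sin_ratio_less_one[OF assms] unfolding gamma_fn_def by simp

lemma gamma_fn_squared:
  assumes "(sin t)^2 < (sin x)^2"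
  shows "(gamma_fn t x)^2 = 1 - (sin t)^2 / (sin x)^2"
  using sin_ratio_less_one[OF assms] unfolding gamma_fn_def by simp

lemma has_real_derivative_gamma_fn:
  assumes "(sin t)^2 < (sin x)^2"
  shows "(gamma_fn t has_real_derivative
           (sin t)^2 * cos x / (gamma_fn t x * (sin x)^3)) (at x)"
proof -
  have sx: "sin x \<noteq> 0"
    using assms by auto
  have "((\<lambda>x. 1 - (sin t)^2 / (sin x)^2) has_real_derivative
          2 * (sin t)^2 * cos x / (sin x)^3) (at x)"
    by (rule derivative_eq_intros refl | use sx in \<open>simp add: field_simps power_def\<close>)+
  from DERIV_chain2[OF DERIV_real_sqrt this]
  show ?thesis
    using gamma_fn_pos[OF assms] sin_ratio_less_one[OF assms]
    by (simp add: gamma_fn_def[abs_def] field_simps)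
qed

lemma sqrt_one_minus_cos_ratio_squared:
  assumes "cos t > 0" "sin x > 0" "(sin t)^2 < (sin x)^2"
  shows "sqrt (1 - (cos x / cos t)^2) = gamma_fn t x * sin x / cos t"
proof (rule real_sqrt_unique)
  have "(gamma_fn t x)^2 * (sin x)^2 = (sin x)^2 - (sin t)^2"
    using assms by (simp add: gamma_fn_squared field_simps)
  then have "(gamma_fn t x * sin x)^2 = (cos t)^2 - (cos x)^2"
    unfolding power_mult_distrib using sin_cos_squared_add[of t] sin_cos_squared_add[of x]
    by linarith
  then show "(gamma_fn t x * sin x / cos t)^2 = 1 - (cos x / cos t)^2"
    using assms by (simp add: power_divide field_simps)
  show "0 \<le> gamma_fn t x * sin x / cos t"
    using assms gamma_fn_pos[OF assms(3)] by simp
qed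

lemma has_real_derivative_arccos_cos_ratio:
  assumes "cos t > 0" "sin x > 0" "(sin t)^2 < (sin x)^2"
  shows "((\<lambda>x. arccos (cos x / cos t)) has_real_derivative 1 / gamma_fn t x) (at x)"
proof -
  have "(cos x)^2 < (cos t)^2"
    using assms sin_cos_squared_add[of t] sin_cos_squared_add[of x] by linarith
  then have "(cos x / cos t)^2 < 1"
    using assms by (simp add: power_divide)
  then have "\<bar>cos x / cos t\<bar> < 1"
    by (simp only: abs_square_less_1)
  then have "- 1 < cos x / cos t" "cos x / cos t < 1"
    by linarith+
  then have "((\<lambda>x. arccos (cos x / cos t)) has_real_derivative
      inverse (- sqrt (1 - (cos x / cos t)^2)) * (- sin x / cos t)) (at x)"
    using assms(1) by (intro DERIV_chain2[OF DERIV_arccos] derivative_eq_intros refl) auto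
  then show ?thesis
    unfolding sqrt_one_minus_cos_ratio_squared[OF assms]
    using assms gamma_fn_pos[OF assms(3)] by (simp add: field_simps)
qed

lemma Phi_zero: "Phi t 0 x = - x * gamma_fn t x + arccos (cos x / cos t)"
  by (simp add: Phi_def)

lemma has_real_derivative_Phi_zero:
  assumes "cos t > 0" "sin x > 0" "(sin t)^2 < (sin x)^2"
  shows "(Phi t 0 has_real_derivative
           (sin t)^2 / (gamma_fn t x * (sin x)^2) * (1 - x * cos x / sin x)) (at x)"
proof -
  have "(Phi t 0 has_real_derivative
      - gamma_fn t x - x * ((sin t)^2 * cos x / (gamma_fn t x * (sin x)^3))
      + 1 / gamma_fn t x) (at x)"
    unfolding Phi_zero[abs_def]
    by (rule derivative_eq_intros has_real_derivative_gamma_fn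
        has_real_derivative_arccos_cos_ratio refl assms | simp)+
  also have "- gamma_fn t x - x * ((sin t)^2 * cos x / (gamma_fn t x * (sin x)^3))
      + 1 / gamma_fn t x
      = (1 - (gamma_fn t x)^2) / gamma_fn t x - x * ((sin t)^2 * cos x / (gamma_fn t x * (sin x)^3))"
    using gamma_fn_pos[OF assms(3)] by (simp add: field_simps power2_eq_square)
  also have "\<dots> = (sin t)^2 / (gamma_fn t x * (sin x)^2) * (1 - x * cos x / sin x)"
    unfolding gamma_fn_squared[OF assms(3)] using assms gamma_fn_pos[OF assms(3)]
    by (simp add: field_simps power2_eq_square power3_eq_cube)
  finally show ?thesis .
qed

lemma DERIV_pos_imp_strict_mono_on:
  fixes f :: "real \<Rightarrow> real"
  assumes "continuous_on {a..b} f"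
    and "\<And>x. a < x \<Longrightarrow> x < b \<Longrightarrow> \<exists>d. (f has_real_derivative d) (at x) \<and> d > 0"
  shows "strict_mono_on {a..b} f"
proof (rule strict_mono_onI)
  fix x y
  assume xy: "x \<in> {a..b}" "y \<in> {a..b}" "x < y"
  then have "continuous_on {x..y} f"
    by (auto intro: continuous_on_subset[OF assms(1)])
  moreover have "\<exists>d. (f has_real_derivative d) (at z) \<and> d > 0" if "x < z" "z < y" for z
    using xy that by (intro assms(2)) auto
  ultimately show "f x < f y"
    using DERIV_pos_imp_increasing_open[OF \<open>x < y\<close>] by blast
qed

lemma continuous_on_Phi_zero:
  assumes "0 < t" "t < pi/2"
  shows "continuous_on {t..pi/2} (Phi t 0)"
proof -
  have ct: "cos t > 0"
    using assms by (simp add: cos_gt_zero_pi)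
  have "sin x \<noteq> 0 \<and> - 1 \<le> cos x / cos t \<and> cos x / cos t \<le> 1" if "x \<in> {t..pi/2}" for x
  proof -
    have "sin x > 0" "0 \<le> cos x" "cos x \<le> cos t"
      using that assms by (auto intro!: sin_gt_zero cos_ge_zero cos_monotone_0_pi_le)
    then show ?thesis
      using ct by (simp add: divide_le_eq_1 order.trans[of "-1" 0])
  qed
  then show ?thesis
    using ct unfolding Phi_zero[abs_def] gamma_fn_def by (auto intro!: continuous_intros)
qed

lemma strict_mono_on_Phi_zero:
  assumes "0 < t" "t < pi/2"
  shows "strict_mono_on {t..pi/2} (Phi t 0)"
proof (rule DERIV_pos_imp_strict_mono_on[OF continuous_on_Phi_zero[OF assms]])
  fix x
  assume x: "t < x" "x < pi/2"
  have ct: "cos t > 0"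
    using assms by (simp add: cos_gt_zero_pi)
  have st: "sin t > 0" and "sin t < sin x"
    using assms x by (simp_all add: sin_gt_zero sin_monotone_2pi)
  then have sx: "sin x > 0" and sq: "(sin t)^2 < (sin x)^2"
    by (simp_all add: power_strict_mono)
  have "1 - x * cos x / sin x > 0"
    using x_cos_less_sin[of x] x assms sx by (simp add: field_simps)
  then have "(sin t)^2 / (gamma_fn t x * (sin x)^2) * (1 - x * cos x / sin x) > 0"
    using st sx gamma_fn_pos[OF sq] by simp
  then show "\<exists>d. (Phi t 0 has_real_derivative d) (at x) \<and> d > 0"
    using has_real_derivative_Phi_zero[OF ct sx sq] by blast
qed

lemma Phi_zero_left_endpoint:
  assumes "sin t \<noteq> 0" "cos t \<noteq> 0"
  shows "Phi t 0 t = 0"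
  using assms by (simp add: Phi_zero gamma_fn_def)

lemma Phi_zero_pi_half:
  assumes "cos t \<ge> 0"
  shows "Phi t 0 (pi/2) = pi / 2 * (1 - cos t)"
proof -
  have "gamma_fn t (pi/2) = cos t"
    using assms by (simp add: gamma_fn_def cos_squared_eq[symmetric])
  then show ?thesis
    by (simp add: Phi_zero algebra_simps)
qed

theorem lemma5p7:
  fixes th1 :: real
  assumes "0 < th1" and "th1 < pi / 2"
  shows "strict_mono_on {th1..pi/2} (Phi th1 0)
    \<and> Phi th1 0 th1 = 0
    \<and> Phi th1 0 (pi/2) = pi / 2 * (1 - cos th1)"
proof -
  have "sin th1 > 0" "cos th1 > 0"
    using assms by (simp_all add: sin_gt_zero cos_gt_zero_pi)
  then show ?thesis
    using strict_mono_on_Phi_zero[OF assms] Phi_zero_left_endpoint Phi_zero_pi_half by simp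
qed

end
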